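(* Let $n\ge2$ and $\omega\in\widetilde{S}_n$. Then $\omega$ contains $1342$ if and only if $\omega$ contains $231$; $\omega$ contains $2314$ if and only if it contains $231$; and $\omega$ contains $1423$ if and only if it contains $312$, which holds if and only if it contains $3124$.
   Context: For $n\ge 2$, the affine symmetric group $\widetilde{S}_n$ is the set of bijections $\omega:\mathbb{Z}\to\mathbb{Z}$ such that $\omega(i+n)=\omega(i)+n$ for all $i\in\mathbb{Z}$ and $\sum_{i=1}^n\omega(i)=\binom{n+1}{2}$; write $\omega_i=\omega(i)$. For $p\in S_k$, $\omega$ contains $p$ if there exist integers $i_1<\cdots<i_k$ such that $\omega_{i_1}\cdots\omega_{i_k}$ has the same relative order as $p_1\cdots p_k$; otherwise $\omega$ avoids $p$. *)

theory Defs
  imports Main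
begin

definition affine_perm :: "nat \<Rightarrow> (int \<Rightarrow> int) \<Rightarrow> bool" where
  "affine_perm n w \<longleftrightarrow> bij w \<and> (\<forall>i. w (i + int n) = w i + int n)
     \<and> (\<Sum>i\<in>{1..int n}. w i) = int ((n + 1) choose 2)"

definition contains :: "(int \<Rightarrow> int) \<Rightarrow> nat list \<Rightarrow> bool" where
  "contains w p \<longleftrightarrow> (\<exists>idx :: nat \<Rightarrow> int.
      (\<forall>a b. a < b \<and> b < length p \<longrightarrow> idx a < idx b) \<and>
      (\<forall>a b. a < length p \<and> b < length p \<longrightarrow>
          (w (idx a) < w (idx b) \<longleftrightarrow> p ! a < p ! b)))"

end

theory Submission
  imports Defs
begin

(* All four equivalences are instances of two general facts about pattern
   containment.  If w takes arbitrarily small values arbitrarily far to the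
   left, then a pattern p is contained in w iff the pattern 1 # map Suc p
   (p with a new minimum prepended) is: an occurrence of p extends by a
   position to its left whose value lies below every value used.  Dually, if
   w takes arbitrarily large values arbitrarily far to the right, p is
   contained iff p @ [m] is, for m exceeding all entries of p.  The converse
   directions just forget the extra entry.
   Every affine permutation w satisfies both hypotheses, because
   w (i + t*n) = w i + t*n.  Since 1342 = 1 # map Suc 231, 2314 = 231 @ [4],
   1423 = 1 # map Suc 312 and 3124 = 312 @ [4], the theorem follows. *)

lemma exists_left_below_finite:
  fixes w :: "int \<Rightarrow> int"
  assumes unbounded: "\<forall>i v. \<exists>h<i. w h < v" and "finite I" and "finite V"
  shows "\<exists>h. (\<forall>i\<in>I. h < i) \<and> (\<forall>v\<in>V. w h < v)"
proof -
  obtain h where "h < Min (insert 0 I)" and "w h < Min (insert 0 V)"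
    using unbounded by blast
  moreover have "Min (insert 0 I) \<le> i" if "i \<in> I" for i
    using that \<open>finite I\<close> by simp
  moreover have "Min (insert 0 V) \<le> v" if "v \<in> V" for v
    using that \<open>finite V\<close> by simp
  ultimately show ?thesis by (intro exI[of _ h]) force
qed

lemma exists_right_above_finite:
  fixes w :: "int \<Rightarrow> int"
  assumes unbounded: "\<forall>i v. \<exists>h>i. v < w h" and "finite I" and "finite V"
  shows "\<exists>h. (\<forall>i\<in>I. i < h) \<and> (\<forall>v\<in>V. v < w h)"
proof -
  obtain h where "Max (insert 0 I) < h" and "Max (insert 0 V) < w h"
    using unbounded by blast
  moreover have "i \<le> Max (insert 0 I)" if "i \<in> I" for i
    using that \<open>finite I\<close> by simp
  moreover have "v \<le> Max (insert 0 V)" if "v \<in> V" for v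
    using that \<open>finite V\<close> by simp
  ultimately show ?thesis by (intro exI[of _ h]) force
qed

lemma contains_prepend_min_iff:
  fixes w :: "int \<Rightarrow> int" and p :: "nat list"
  assumes unbounded: "\<forall>i v. \<exists>h<i. w h < v" and positive: "0 \<notin> set p"
  shows "contains w (1 # map Suc p) \<longleftrightarrow> contains w p"
proof
  assume "contains w (1 # map Suc p)"
  then obtain idx :: "nat \<Rightarrow> int"
    where incr: "\<forall>a b. a < b \<and> b < Suc (length p) \<longrightarrow> idx a < idx b"
      and order: "\<forall>a b. a < Suc (length p) \<and> b < Suc (length p) \<longrightarrow>
          (w (idx a) < w (idx b) \<longleftrightarrow> (1 # map Suc p) ! a < (1 # map Suc p) ! b)"
    unfolding contains_def by auto
  have "\<forall>a b. a < b \<and> b < length p \<longrightarrow> idx (Suc a) < idx (Suc b)"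
    using incr by auto
  moreover have "\<forall>a b. a < length p \<and> b < length p \<longrightarrow>
      (w (idx (Suc a)) < w (idx (Suc b)) \<longleftrightarrow> p ! a < p ! b)"
    using order by fastforce
  ultimately show "contains w p"
    unfolding contains_def by (intro exI[of _ "\<lambda>a. idx (Suc a)"]) auto
next
  assume "contains w p"
  then obtain idx :: "nat \<Rightarrow> int"
    where incr: "\<forall>a b. a < b \<and> b < length p \<longrightarrow> idx a < idx b"
      and order: "\<forall>a b. a < length p \<and> b < length p \<longrightarrow>
          (w (idx a) < w (idx b) \<longleftrightarrow> p ! a < p ! b)"
    unfolding contains_def by blast
  obtain h where left: "\<forall>a<length p. h < idx a" and below: "\<forall>a<length p. w h < w (idx a)"
    using exists_left_below_finite[OF unbounded,
        of "idx ` {..<length p}" "(\<lambda>a. w (idx a)) ` {..<length p}"] by auto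
  have entry_pos: "0 < p ! a" if "a < length p" for a
    using positive that nth_mem by (metis gr0I)
  define idx' where "idx' a = (case a of 0 \<Rightarrow> h | Suc a \<Rightarrow> idx a)" for a
  have "\<forall>a b. a < b \<and> b < length (1 # map Suc p) \<longrightarrow> idx' a < idx' b"
    using incr left by (auto simp: idx'_def split: nat.split)
  moreover have "\<forall>a b. a < length (1 # map Suc p) \<and> b < length (1 # map Suc p) \<longrightarrow>
      (w (idx' a) < w (idx' b) \<longleftrightarrow> (1 # map Suc p) ! a < (1 # map Suc p) ! b)"
    using order below entry_pos
    by (auto simp: idx'_def split: nat.split)
  ultimately show "contains w (1 # map Suc p)"
    unfolding contains_def by blast
qed

lemma contains_append_max_iff:
  fixes w :: "int \<Rightarrow> int" and p :: "nat list"
  assumes unbounded: "\<forall>i v. \<exists>h>i. v < w h" and largest: "\<forall>x\<in>set p. x < m"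
  shows "contains w (p @ [m]) \<longleftrightarrow> contains w p"
proof
  assume "contains w (p @ [m])"
  then obtain idx :: "nat \<Rightarrow> int"
    where incr: "\<forall>a b. a < b \<and> b < Suc (length p) \<longrightarrow> idx a < idx b"
      and order: "\<forall>a b. a < Suc (length p) \<and> b < Suc (length p) \<longrightarrow>
          (w (idx a) < w (idx b) \<longleftrightarrow> (p @ [m]) ! a < (p @ [m]) ! b)"
    unfolding contains_def by auto
  have "\<forall>a b. a < length p \<and> b < length p \<longrightarrow>
      (w (idx a) < w (idx b) \<longleftrightarrow> p ! a < p ! b)"
    using order by (auto simp: nth_append)
  with incr show "contains w p"
    unfolding contains_def by (intro exI[of _ idx]) auto
next
  assume "contains w p"
  then obtain idx :: "nat \<Rightarrow> int"
    where incr: "\<forall>a b. a < b \<and> b < length p \<longrightarrow> idx a < idx b"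
      and order: "\<forall>a b. a < length p \<and> b < length p \<longrightarrow>
          (w (idx a) < w (idx b) \<longleftrightarrow> p ! a < p ! b)"
    unfolding contains_def by blast
  obtain h where right: "\<forall>a<length p. idx a < h" and above: "\<forall>a<length p. w (idx a) < w h"
    using exists_right_above_finite[OF unbounded,
        of "idx ` {..<length p}" "(\<lambda>a. w (idx a)) ` {..<length p}"] by auto
  have entry_small: "p ! a < m" if "a < length p" for a
    using largest that nth_mem by blast
  define idx' where "idx' a = (if a < length p then idx a else h)" for a
  have "\<forall>a b. a < b \<and> b < length (p @ [m]) \<longrightarrow> idx' a < idx' b"
    using incr right by (auto simp: idx'_def)
  moreover have "\<forall>a b. a < length (p @ [m]) \<and> b < length (p @ [m]) \<longrightarrow>
      (w (idx' a) < w (idx' b) \<longleftrightarrow> (p @ [m]) ! a < (p @ [m]) ! b)"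
    using order above entry_small
    by (auto simp: idx'_def nth_append less_Suc_eq) (meson less_asym)+
  ultimately show "contains w (p @ [m])"
    unfolding contains_def by blast
qed

lemma periodic_shift:
  fixes w :: "int \<Rightarrow> int"
  assumes periodic: "\<forall>i. w (i + int n) = w i + int n"
  shows "w (i + int n * int t) = w i + int n * int t"
proof (induction t)
  case 0
  then show ?case by simp
next
  case (Suc t)
  have "w (i + int n * int (Suc t)) = w ((i + int n * int t) + int n)"
    by (simp add: algebra_simps)
  also have "\<dots> = w (i + int n * int t) + int n"
    using periodic by blast
  also have "\<dots> = w i + int n * int (Suc t)"
    using Suc by (simp add: algebra_simps)
  finally show ?case .
qed

text \<open>A periodic w with positive period is unbounded below to the left and
  above to the right: shift a position by a large multiple of the period.\<close>

lemma periodic_unbounded: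
  fixes w :: "int \<Rightarrow> int"
  assumes periodic: "\<forall>i. w (i + int n) = w i + int n" and "n \<ge> 1"
  shows "\<forall>i v. \<exists>h<i. w h < v" and "\<forall>i v. \<exists>h>i. v < w h"
proof -
  have large: "int t \<le> int n * int t" for t
    using \<open>n \<ge> 1\<close> by (simp add: mult_le_cancel_right1)
  show "\<forall>i v. \<exists>h<i. w h < v"
  proof (intro allI)
    fix i v
    define t where "t = nat (\<bar>w i\<bar> + \<bar>v\<bar> + 1)"
    have "w (i - int n * int t) = w i - int n * int t"
      using periodic_shift[OF periodic, of "i - int n * int t" t] by simp
    moreover have "\<bar>w i\<bar> + \<bar>v\<bar> + 1 \<le> int n * int t"
      using large[of t] by (simp add: t_def)
    ultimately show "\<exists>h<i. w h < v"
      by (intro exI[of _ "i - int n * int t"]) auto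
  qed
  show "\<forall>i v. \<exists>h>i. v < w h"
  proof (intro allI)
    fix i v
    define t where "t = nat (\<bar>w i\<bar> + \<bar>v\<bar> + 1)"
    have "\<bar>w i\<bar> + \<bar>v\<bar> + 1 \<le> int n * int t"
      using large[of t] by (simp add: t_def)
    then show "\<exists>h>i. v < w h"
      using periodic_shift[OF periodic, of i t]
      by (intro exI[of _ "i + int n * int t"]) auto
  qed
qed

theorem mainTheorem11:
  fixes n :: nat and w :: "int \<Rightarrow> int"
  assumes "n \<ge> 2" and "affine_perm n w"
  shows "(contains w [1,3,4,2] \<longleftrightarrow> contains w [2,3,1])
       \<and> (contains w [2,3,1,4] \<longleftrightarrow> contains w [2,3,1])
       \<and> (contains w [1,4,2,3] \<longleftrightarrow> contains w [3,1,2])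
       \<and> (contains w [3,1,2] \<longleftrightarrow> contains w [3,1,2,4])"
proof -
  have periodic: "\<forall>i. w (i + int n) = w i + int n"
    using assms(2) unfolding affine_perm_def by blast
  have left: "\<forall>i v. \<exists>h<i. w h < v" and right: "\<forall>i v. \<exists>h>i. v < w h"
    using periodic_unbounded[OF periodic] assms(1) by auto
  have "contains w [1,3,4,2] \<longleftrightarrow> contains w [2,3,1]"
    using contains_prepend_min_iff[OF left, of "[2,3,1]"] by (simp add: numeral_eq_Suc)
  moreover have "contains w [2,3,1,4] \<longleftrightarrow> contains w [2,3,1]"
    using contains_append_max_iff[OF right, of "[2,3,1]" 4] by simp
  moreover have "contains w [1,4,2,3] \<longleftrightarrow> contains w [3,1,2]"
    using contains_prepend_min_iff[OF left, of "[3,1,2]"] by (simp add: numeral_eq_Suc)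
  moreover have "contains w [3,1,2,4] \<longleftrightarrow> contains w [3,1,2]"
    using contains_append_max_iff[OF right, of "[3,1,2]" 4] by simp
  ultimately show ?thesis by blast
qed

end
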